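(* Let $\mathbf{P_0},\mathbf{P_1}$ be $n\times n$ transition probability matrices of irreducible and aperiodic Markov chains on $n$ states, let $\mathbf{P_t}=(1-t)\mathbf{P_0}+t\mathbf{P_1}$ for $t\in[0,1]$, and let $\pi_t$ be the stationary distribution of $\mathbf{P_t}$. Let $T\in\mathbb{N}$. Then for every integer $1\le k\le T$, $$\|\pi_0\mathbf{P_{1/T}}\mathbf{P_{2/T}}\cdots\mathbf{P_{k/T}}-\pi_{k/T}\|_{TV}\le\|\pi_{k/T}-\pi_0\|_{TV}+\frac{(k+1)^2}{2T}.$$
   Context: Distributions are row vectors; $\|\mu-\nu\|_{TV}=\frac12\|\mu-\nu\|_1$. *)

theory Defs
  imports "HOL-Analysis.Analysis"
begin

text \<open>Row-stochastic matrices over a finite state type 'n; distributions are row vectors.\<close>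

definition stochastic_matrix :: "real^'n^'n \<Rightarrow> bool" where
  "stochastic_matrix P \<longleftrightarrow> (\<forall>i j. P $ i $ j \<ge> 0) \<and> (\<forall>i. (\<Sum>j\<in>UNIV. P $ i $ j) = 1)"

primrec matpow :: "real^'n^'n \<Rightarrow> nat \<Rightarrow> real^'n^'n" where
  "matpow P 0 = mat 1"
| "matpow P (Suc m) = matpow P m ** P"

definition irreducible_chain :: "real^'n^'n \<Rightarrow> bool" where
  "irreducible_chain P \<longleftrightarrow> (\<forall>i j. \<exists>m. matpow P m $ i $ j > 0)"

definition aperiodic_chain :: "real^'n^'n \<Rightarrow> bool" where
  "aperiodic_chain P \<longleftrightarrow> (\<forall>i. Gcd {m::nat. m > 0 \<and> matpow P m $ i $ i > 0} = 1)"

definition prob_vector :: "real^'n \<Rightarrow> bool" where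
  "prob_vector \<mu> \<longleftrightarrow> (\<forall>i. \<mu> $ i \<ge> 0) \<and> (\<Sum>i\<in>UNIV. \<mu> $ i) = 1"

definition stationary_dist :: "real^'n^'n \<Rightarrow> real^'n \<Rightarrow> bool" where
  "stationary_dist P \<pi> \<longleftrightarrow> prob_vector \<pi> \<and> \<pi> v* P = \<pi>"

definition tv_dist :: "real^'n \<Rightarrow> real^'n \<Rightarrow> real" where
  "tv_dist \<mu> \<nu> = (1/2) * (\<Sum>i\<in>UNIV. \<bar>\<mu> $ i - \<nu> $ i\<bar>)"

end

theory Submission
  imports Defs
begin

text \<open>Let \<open>u\<^sub>m = \<pi>\<^sub>0 P\<^bsub>1/T\<^esub> \<cdots> P\<^bsub>m/T\<^esub>\<close>. Since \<open>\<pi>\<^sub>0\<close> is stationary for \<open>P\<^sub>0\<close>, one step of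
  \<open>P\<^sub>t\<close> moves \<open>\<pi>\<^sub>0\<close> by \<open>\<pi>\<^sub>0 P\<^sub>t - \<pi>\<^sub>0 = t (\<pi>\<^sub>0 P\<^sub>1 - \<pi>\<^sub>0)\<close>, i.e. by at most \<open>t\<close> in total
  variation. Stochastic matrices contract total variation, so
  \<open>\<parallel>u\<^sub>m - \<pi>\<^sub>0\<parallel> \<le> \<parallel>u\<^bsub>m-1\<^esub> - \<pi>\<^sub>0\<parallel> + m/T\<close>, whence \<open>\<parallel>u\<^sub>k - \<pi>\<^sub>0\<parallel> \<le> k(k+1)/(2T)\<close>.
  The triangle inequality through \<open>\<pi>\<^sub>0\<close> gives the claim.\<close>

lemma tv_dist_self [simp]: "tv_dist \<mu> \<mu> = 0"
  unfolding tv_dist_def by simp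

lemma tv_dist_commute: "tv_dist \<mu> \<nu> = tv_dist \<nu> \<mu>"
  unfolding tv_dist_def by (simp add: abs_minus_commute)

lemma tv_dist_triangle: "tv_dist \<mu> \<rho> \<le> tv_dist \<mu> \<nu> + tv_dist \<nu> \<rho>"
proof -
  have "(\<Sum>i\<in>UNIV. \<bar>\<mu> $ i - \<rho> $ i\<bar>) \<le> (\<Sum>i\<in>UNIV. \<bar>\<mu> $ i - \<nu> $ i\<bar> + \<bar>\<nu> $ i - \<rho> $ i\<bar>)"
    by (intro sum_mono) linarith
  then show ?thesis
    unfolding tv_dist_def by (simp add: sum.distrib)
qed

lemma tv_dist_le_1:
  assumes "prob_vector \<mu>" "prob_vector \<nu>"
  shows "tv_dist \<mu> \<nu> \<le> 1"
proof -
  have "(\<Sum>i\<in>UNIV. \<bar>\<mu> $ i - \<nu> $ i\<bar>) \<le> (\<Sum>i\<in>UNIV. \<mu> $ i + \<nu> $ i)"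
    using assms unfolding prob_vector_def by (intro sum_mono) (simp add: abs_le_iff)
  then show ?thesis
    using assms unfolding tv_dist_def prob_vector_def by (simp add: sum.distrib)
qed

lemma vector_matrix_mult_diff: "(x - y) v* P = x v* P - y v* (P::real^'m^'n)"
  unfolding vector_matrix_mult_def vec_eq_iff
  by (simp add: left_diff_distrib sum_subtractf)

lemma vector_matrix_mult_convex_comb:
  "x v* ((1 - t) *\<^sub>R A + t *\<^sub>R B) = x v* A + t *\<^sub>R (x v* B - x v* (A::real^'m^'n))"
  by (simp add: vec_eq_iff vector_matrix_mult_def algebra_simps sum.distrib sum_subtractf
      sum_distrib_left)

lemma stochastic_matrix_convex_comb:
  assumes "stochastic_matrix A" "stochastic_matrix B" "0 \<le> t" "t \<le> 1"
  shows "stochastic_matrix ((1 - t) *\<^sub>R A + t *\<^sub>R B)"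
  using assms unfolding stochastic_matrix_def
  by (simp add: sum.distrib sum_distrib_left[symmetric])

lemma prob_vector_vector_matrix_mult:
  assumes "prob_vector \<mu>" "stochastic_matrix P"
  shows "prob_vector (\<mu> v* P)"
proof -
  have "(\<Sum>j\<in>UNIV. \<Sum>i\<in>UNIV. \<mu> $ i * P $ i $ j) = (\<Sum>i\<in>UNIV. \<mu> $ i * (\<Sum>j\<in>UNIV. P $ i $ j))"
    by (subst sum.swap) (simp add: sum_distrib_left mult.commute)
  with assms show ?thesis
    unfolding prob_vector_def stochastic_matrix_def vector_matrix_mult_def
    by (simp add: sum_nonneg)
qed

lemma tv_dist_vector_matrix_mult_le:
  assumes "stochastic_matrix P"
  shows "tv_dist (\<mu> v* P) (\<nu> v* P) \<le> tv_dist \<mu> \<nu>"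
proof -
  define x where "x = \<mu> - \<nu>"
  have "(\<Sum>j\<in>UNIV. \<bar>(x v* P) $ j\<bar>) = (\<Sum>j\<in>UNIV. \<bar>\<Sum>i\<in>UNIV. P $ i $ j * x $ i\<bar>)"
    by (simp add: vector_matrix_mult_def mult.commute)
  also have "\<dots> \<le> (\<Sum>j\<in>UNIV. \<Sum>i\<in>UNIV. P $ i $ j * \<bar>x $ i\<bar>)"
    using assms by (intro sum_mono order_trans[OF sum_abs]) (simp add: stochastic_matrix_def abs_mult)
  also have "\<dots> = (\<Sum>i\<in>UNIV. \<bar>x $ i\<bar> * (\<Sum>j\<in>UNIV. P $ i $ j))"
    by (subst sum.swap) (simp add: sum_distrib_left mult.commute)
  also have "\<dots> = (\<Sum>i\<in>UNIV. \<bar>x $ i\<bar>)"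
    using assms by (simp add: stochastic_matrix_def)
  finally show ?thesis
    unfolding tv_dist_def x_def vector_matrix_mult_diff by simp
qed

lemma tv_dist_stationary_convex_comb:
  assumes "\<mu> v* A = \<mu>"
  shows "tv_dist (\<mu> v* ((1 - t) *\<^sub>R A + t *\<^sub>R B)) \<mu> = \<bar>t\<bar> * tv_dist (\<mu> v* B) \<mu>"
  unfolding vector_matrix_mult_convex_comb assms tv_dist_def
  by (simp add: abs_mult sum_distrib_left right_diff_distrib[symmetric])

lemma tv_dist_foldl_vector_matrix_mult_le:
  assumes "\<And>j. j \<in> set js \<Longrightarrow> stochastic_matrix (Q j)"
    and "\<And>j. j \<in> set js \<Longrightarrow> tv_dist (\<pi> v* Q j) \<pi> \<le> \<epsilon> j"
  shows "tv_dist (foldl (\<lambda>v j. v v* Q j) \<mu> js) \<pi> \<le> tv_dist \<mu> \<pi> + sum_list (map \<epsilon> js)"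
  using assms
proof (induction js arbitrary: \<mu>)
  case Nil
  then show ?case by simp
next
  case (Cons j js)
  have "tv_dist (\<mu> v* Q j) \<pi> \<le> tv_dist (\<mu> v* Q j) (\<pi> v* Q j) + tv_dist (\<pi> v* Q j) \<pi>"
    by (rule tv_dist_triangle)
  also have "\<dots> \<le> tv_dist \<mu> \<pi> + \<epsilon> j"
    using Cons.prems by (intro add_mono tv_dist_vector_matrix_mult_le) auto
  finally have "tv_dist (\<mu> v* Q j) \<pi> \<le> tv_dist \<mu> \<pi> + \<epsilon> j" .
  moreover have "tv_dist (foldl (\<lambda>v j. v v* Q j) (\<mu> v* Q j) js) \<pi>
      \<le> tv_dist (\<mu> v* Q j) \<pi> + sum_list (map \<epsilon> js)"
    using Cons.prems by (intro Cons.IH) auto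
  ultimately show ?case by simp
qed

lemma sum_list_map_divide_upt:
  "sum_list (map (\<lambda>j. real j / real T) [1..<k+1]) = real k * (real k + 1) / (2 * real T)"
proof -
  have "sum_list (map (\<lambda>j. real j / real T) [1..<k+1]) = (\<Sum>j = Suc 0..k. real j) / real T"
    unfolding sum_set_upt_conv_sum_list_nat[symmetric]
    by (simp add: atLeastLessThanSuc_atLeastAtMost sum_divide_distrib del: upt_Suc)
  also have "\<dots> = real k * (real k + 1) / (2 * real T)"
    using double_gauss_sum_from_Suc_0[of k, where ?'a = real]
    by (metis divide_divide_eq_left nonzero_mult_div_cancel_left zero_neq_numeral)
  finally show ?thesis .
qed

theorem proposition3:
  fixes P0 P1 :: "real^'n^'n" and \<pi> :: "real \<Rightarrow> real^'n" and T k :: nat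
  assumes "stochastic_matrix P0" "irreducible_chain P0" "aperiodic_chain P0"
    and "stochastic_matrix P1" "irreducible_chain P1" "aperiodic_chain P1"
    and "\<And>t. t \<in> {0..1} \<Longrightarrow> stationary_dist ((1 - t) *\<^sub>R P0 + t *\<^sub>R P1) (\<pi> t)"
    and "1 \<le> k" "k \<le> T"
  shows "tv_dist (foldl (\<lambda>v j. v v* ((1 - real j / real T) *\<^sub>R P0 + (real j / real T) *\<^sub>R P1))
                    (\<pi> 0) [1..<k+1])
                 (\<pi> (real k / real T))
         \<le> tv_dist (\<pi> (real k / real T)) (\<pi> 0) + (real k + 1)^2 / (2 * real T)"
proof -
  define Q where "Q j = (1 - real j / real T) *\<^sub>R P0 + (real j / real T) *\<^sub>R P1" for j :: nat
  define u where "u = foldl (\<lambda>v j. v v* Q j) (\<pi> 0) [1..<k+1]"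
  have stationary: "\<pi> 0 v* P0 = \<pi> 0" "prob_vector (\<pi> 0)"
    using assms(7)[of 0] by (auto simp: stationary_dist_def)
  have "tv_dist (\<pi> 0 v* Q j) (\<pi> 0) \<le> real j / real T" for j
    using tv_dist_le_1[OF prob_vector_vector_matrix_mult[OF stationary(2) assms(4)] stationary(2)]
    unfolding Q_def tv_dist_stationary_convex_comb[OF stationary(1)]
    by (simp add: divide_right_mono mult_left_le)
  moreover have "stochastic_matrix (Q j)" if "j \<in> set [1..<k+1]" for j
    unfolding Q_def using that assms(9) by (intro stochastic_matrix_convex_comb assms(1,4)) auto
  ultimately have "tv_dist u (\<pi> 0) \<le> real k * (real k + 1) / (2 * real T)"
    using tv_dist_foldl_vector_matrix_mult_le[of "[1..<k+1]" Q "\<pi> 0" "\<lambda>j. real j / real T" "\<pi> 0"]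
    unfolding u_def sum_list_map_divide_upt by (simp del: upt_Suc)
  also have "\<dots> \<le> (real k + 1)^2 / (2 * real T)"
    by (intro divide_right_mono) (auto simp: power2_eq_square)
  finally have "tv_dist u (\<pi> 0) \<le> (real k + 1)^2 / (2 * real T)" .
  then show ?thesis
    using tv_dist_triangle[of u "\<pi> (real k / real T)" "\<pi> 0"]
      tv_dist_commute[of "\<pi> 0" "\<pi> (real k / real T)"]
    unfolding u_def Q_def by linarith
qed

end
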